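(* Let $G$ be a finite group acting linearly by orthogonal transformations on $\mathbb R^n$, freely on $\mathbb S^{n-1}$; let $v_0\in\mathbb S^{n-1}$ be such that $\mathcal V=G\cdot v_0$ spans $\mathbb R^n$, and let $\mathcal P=\operatorname{conv}(\mathcal V)$ (the orbit polytope). Then there exists a system of representatives $F_1,\dots,F_r$ of the $G$-orbits on the set of facets of $\mathcal P$ such that $\mathcal D=F_1\cup\cdots\cup F_r$ is a fundamental domain for the action of $G$ on the boundary $\partial\mathcal P$. Consequently $\{x/|x|: x\in\mathcal D\}$ is a fundamental domain for the action of $G$ on $\mathbb S^{n-1}$.
   Context: A facet is a face of codimension one in $\mathcal P$. For a group $G$ acting on a space $X$, a fundamental domain is a connected closed subset $\mathcal D\subseteq X$ with $X=\bigcup_{g\in G}g\mathcal D$ and such that $g\mathcal D\cap g'\mathcal D$ has empty interior for all $g\neq g'$ in $G$. ($\partial\mathcal P$ is homeomorphic to $\mathbb S^{n-1}$ via $x\mapsto x/|x|$.) *)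

theory Defs
  imports "HOL-Analysis.Analysis"
begin

definition fundamental_domain :: "('a::topological_space \<Rightarrow> 'a) set \<Rightarrow> 'a set \<Rightarrow> 'a set \<Rightarrow> bool" where
  "fundamental_domain G X D \<longleftrightarrow>
     D \<subseteq> X \<and> connected D \<and> closedin (top_of_set X) D \<and>
     X = (\<Union>g\<in>G. g ` D) \<and>
     (\<forall>g\<in>G. \<forall>g'\<in>G. g \<noteq> g' \<longrightarrow> (top_of_set X) interior_of (g ` D \<inter> g' ` D) = {})"

definition facet_orbit_representatives :: "('a::euclidean_space \<Rightarrow> 'a) set \<Rightarrow> 'a set \<Rightarrow> 'a set set \<Rightarrow> bool" where
  "facet_orbit_representatives G P R \<longleftrightarrow>
     (\<forall>F\<in>R. F facet_of P) \<and>
     (\<forall>F. F facet_of P \<longrightarrow> (\<exists>!F'. F' \<in> R \<and> (\<exists>g\<in>G. F = g ` F')))"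

end

theory Submission
  imports Defs
begin

text \<open>
Since G acts freely on the sphere, the only vector fixed by all of G is 0; in particular the
barycentre of the orbit vanishes, so 0 is an interior point of P and radial projection is a
G-equivariant homeomorphism from the boundary of P onto the sphere. Likewise the barycentre of
the vertices of a facet is a nonzero vector fixed by the stabiliser of that facet, so G acts
freely on facets; as distinct facets have no common relative interior point, distinct translates
of a system of facet representatives overlap in sets with empty interior in the boundary.
Representatives with connected union are obtained by maximality: if some orbit of facets is
missed, the union of the orbits already met is a closed invariant proper part of the boundary,
which (the boundary being connected, or a single orbit in dimension one) meets a missed facet;
a translate of that facet meets the representatives already chosen and can be added.
\<close>

section \<open>Facets, radial projection and fundamental domains\<close>

lemma facet_of_linear_image:
  assumes "linear f" "inj f" "F facet_of S"
  shows "f ` F facet_of f ` S"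
  using assms by (auto simp: facet_of_def face_of_linear_image)

lemma facets_eq_if_Int_rel_interior:
  assumes F: "F facet_of S" and F': "F' facet_of S" and meet: "F \<inter> rel_interior F' \<noteq> {}"
  shows "F = F'"
proof (rule ccontr)
  assume "F \<noteq> F'"
  have "F' \<subseteq> F"
    using subset_of_face_of[OF facet_of_imp_face_of[OF F] facet_of_imp_subset[OF F'] meet] .
  then have "F' face_of F"
    using face_of_subset facet_of_imp_face_of F F' facet_of_imp_subset by blast
  with \<open>F \<noteq> F'\<close> have "aff_dim F' < aff_dim F"
    using face_of_aff_dim_lt F face_of_imp_convex facet_of_imp_face_of by blast
  then show False
    using F F' by (simp add: facet_of_def)
qed

lemma frontier_eq_Union_facets:
  assumes "polyhedron S" "affine hull S = UNIV"
  shows "frontier S = \<Union>{F. F facet_of S}"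
  using rel_frontier_of_polyhedron[OF assms(1)] rel_frontier_frontier[OF assms(2)] by simp

lemma sum_nonzero_if_convex_avoids_0:
  fixes A :: "'a::real_vector set"
  assumes "convex C" "0 \<notin> C" "finite A" "A \<noteq> {}" "A \<subseteq> C"
  shows "(\<Sum>x\<in>A. x) \<noteq> 0"
proof
  assume sum0: "(\<Sum>x\<in>A. x) = 0"
  have "(\<Sum>x\<in>A. (1 / real (card A)) *\<^sub>R x) \<in> C"
    using assms by (intro convex_sum) (auto simp: card_gt_0_iff)
  then show False
    using assms(2) sum0 by (simp add: scaleR_sum_right[symmetric])
qed

lemma linear_fixes_sum_of_invariant_set:
  assumes "linear f" "inj f" "f ` S = S"
  shows "f (\<Sum>x\<in>S. x) = (\<Sum>x\<in>S. x)"
proof -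
  have "f (\<Sum>x\<in>S. x) = (\<Sum>x\<in>S. f x)"
    using assms(1) by (simp add: linear_sum)
  also have "\<dots> = (\<Sum>y\<in>f ` S. y)"
    using assms(2) by (simp add: sum.reindex inj_on_def)
  finally show ?thesis
    using assms(3) by simp
qed

lemma unit_vectors_DIM_1:
  fixes x y :: "'a::euclidean_space"
  assumes "DIM('a) = 1" "norm x = 1" "norm y = 1"
  shows "y = x \<or> y = - x"
proof -
  obtain b :: 'a where B: "Basis = {b}"
    using card_1_singletonE[OF assms(1)] by blast
  have "b \<in> Basis"
    using B by blast
  then have nb: "norm b = 1"
    by (rule norm_Basis)
  have unit: "z = b \<or> z = - b" if "norm z = 1" for z :: 'a
  proof -
    define c where "c = z \<bullet> b"
    have z: "z = c *\<^sub>R b"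
      using euclidean_representation[of z] by (simp add: B c_def)
    then have "\<bar>c\<bar> = 1"
      using that nb by simp
    then show ?thesis
      by (auto simp: z abs_if split: if_splits)
  qed
  show ?thesis
    using unit[OF assms(2)] unit[OF assms(3)] by auto
qed

lemma scaleR_frontier_eq_1:
  fixes S :: "'a::euclidean_space set"
  assumes S: "convex S" "closed S" "0 \<in> interior S"
    and x: "x \<in> frontier S" and tx: "t *\<^sub>R x \<in> frontier S" and "0 < t"
  shows "t = 1"
proof -
  have shrink: "s *\<^sub>R y \<notin> frontier S" if "y \<in> frontier S" "0 < s" "s < 1" for y s
  proof -
    have "y - (1 - s) *\<^sub>R (y - 0) \<in> interior S"
      using that S by (intro mem_interior_convex_shrink) (auto simp: frontier_subset_closed[THEN subsetD])
    then show ?thesis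
      by (simp add: frontier_def algebra_simps)
  qed
  show ?thesis
  proof (rule ccontr)
    assume "t \<noteq> 1"
    then consider "t < 1" | "1 < t" by linarith
    then show False
    proof cases
      case 1
      then show False using shrink[OF x \<open>0 < t\<close>] tx by blast
    next
      case 2
      then show False
        using shrink[OF tx, of "inverse t"] x \<open>0 < t\<close> by (simp add: inverse_less_1_iff)
    qed
  qed
qed

lemma radial_projection_homeomorphism:
  fixes S :: "'a::euclidean_space set"
  assumes S: "convex S" "compact S" and int0: "0 \<in> interior S"
  obtains f' where "homeomorphism (frontier S) (sphere 0 1) (\<lambda>x. x /\<^sub>R norm x) f'"
proof -
  have nz: "x \<noteq> 0" if "x \<in> frontier S" for x
    using that int0 by (auto simp: frontier_def)
  have "compact (frontier S)"
    using S by (simp add: compact_frontier)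
  moreover have "continuous_on (frontier S) (\<lambda>x. x /\<^sub>R norm x)"
    by (intro continuous_intros) (auto dest: nz)
  moreover have "inj_on (\<lambda>x. x /\<^sub>R norm x) (frontier S)"
  proof (rule inj_onI)
    fix x y assume x: "x \<in> frontier S" and y: "y \<in> frontier S"
      and eq: "x /\<^sub>R norm x = y /\<^sub>R norm y"
    define t where "t = norm y / norm x"
    have "0 < t"
      using nz[OF x] nz[OF y] by (simp add: t_def)
    have "y = norm y *\<^sub>R (y /\<^sub>R norm y)"
      using nz[OF y] by simp
    also have "\<dots> = t *\<^sub>R x"
      using nz[OF x] by (simp add: eq[symmetric] t_def divide_inverse_commute)
    finally have ty: "y = t *\<^sub>R x" .
    then have "t = 1"
      using scaleR_frontier_eq_1[OF S(1) compact_imp_closed[OF S(2)] int0 x] y \<open>0 < t\<close> by simp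
    then show "x = y"
      using ty by simp
  qed
  moreover have "(\<lambda>x. x /\<^sub>R norm x) ` frontier S = sphere 0 1"
  proof
    show "(\<lambda>x. x /\<^sub>R norm x) ` frontier S \<subseteq> sphere 0 1"
      using nz by auto
    show "sphere 0 1 \<subseteq> (\<lambda>x. x /\<^sub>R norm x) ` frontier S"
    proof
      fix u :: 'a assume u: "u \<in> sphere 0 1"
      then have "u \<noteq> 0"
        by auto
      then obtain d where d: "0 < d" "0 + d *\<^sub>R u \<in> frontier S"
        using ray_to_frontier[OF compact_imp_bounded[OF S(2)] int0] by blast
      then have "d *\<^sub>R u \<in> frontier S"
        by simp
      moreover have "u = (d *\<^sub>R u) /\<^sub>R norm (d *\<^sub>R u)"
        using d(1) u by simp
      ultimately show "u \<in> (\<lambda>x. x /\<^sub>R norm x) ` frontier S"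
        by (rule rev_image_eqI)
    qed
  qed
  ultimately show thesis
    using homeomorphism_compact that by blast
qed

lemma homeomorphism_imp_homeomorphic_map:
  "homeomorphism S T f f' \<Longrightarrow> homeomorphic_map (top_of_set S) (top_of_set T) f"
  by (force simp: homeomorphic_map_maps homeomorphic_maps_def homeomorphism_def Pi_iff)

lemma fundamental_domain_homeomorphism_image:
  assumes D: "fundamental_domain G X D" and hom: "homeomorphism X Y f f'"
    and invariant: "\<And>g. g \<in> G \<Longrightarrow> g ` X \<subseteq> X"
    and equivariant: "\<And>g x. g \<in> G \<Longrightarrow> x \<in> X \<Longrightarrow> f (g x) = g (f x)"
  shows "fundamental_domain G Y (f ` D)"
proof -
  have DX: "D \<subseteq> X" and conn: "connected D" and closed: "closedin (top_of_set X) D"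
    and cover: "X = (\<Union>g\<in>G. g ` D)"
    and disjoint: "\<And>g g'. g \<in> G \<Longrightarrow> g' \<in> G \<Longrightarrow> g \<noteq> g' \<Longrightarrow>
                     top_of_set X interior_of (g ` D \<inter> g' ` D) = {}"
    using D by (auto simp: fundamental_domain_def)
  have hm: "homeomorphic_map (top_of_set X) (top_of_set Y) f"
    using homeomorphism_imp_homeomorphic_map[OF hom] .
  have inj: "inj_on f X"
    using hom by (metis homeomorphism_apply1 inj_on_inverseI)
  have commute: "g ` f ` D = f ` g ` D" if "g \<in> G" for g
  proof -
    have "g ` f ` D = (\<lambda>x. g (f x)) ` D"
      by (rule image_image)
    also have "\<dots> = (\<lambda>x. f (g x)) ` D"
      using equivariant[OF that] DX by (intro image_cong) auto
    also have "\<dots> = f ` g ` D"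
      by (rule image_image[symmetric])
    finally show ?thesis .
  qed
  have gDX: "g ` D \<subseteq> X" if "g \<in> G" for g
    using invariant[OF that] DX by blast
  show ?thesis
    unfolding fundamental_domain_def
  proof (intro conjI ballI impI)
    show "f ` D \<subseteq> Y"
      using DX homeomorphism_image1[OF hom] by blast
    show "connected (f ` D)"
      using conn continuous_on_subset[OF homeomorphism_cont1[OF hom] DX]
      by (rule connected_continuous_image[rotated])
    show "closedin (top_of_set Y) (f ` D)"
      using homeomorphic_map_closedness[OF hm] DX closed by simp
    have "Y = f ` (\<Union>g\<in>G. g ` D)"
      using homeomorphism_image1[OF hom] cover by simp
    also have "\<dots> = (\<Union>g\<in>G. f ` g ` D)"
      by (rule image_UN)
    also have "\<dots> = (\<Union>g\<in>G. g ` f ` D)"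
      using commute by (intro SUP_cong) auto
    finally show "Y = (\<Union>g\<in>G. g ` f ` D)" .
    fix g g' assume g: "g \<in> G" and g': "g' \<in> G" and "g \<noteq> g'"
    have "g ` f ` D \<inter> g' ` f ` D = f ` (g ` D \<inter> g' ` D)"
      using commute[OF g] commute[OF g'] inj_on_image_Int[OF inj gDX[OF g] gDX[OF g']] by simp
    moreover have "top_of_set Y interior_of f ` (g ` D \<inter> g' ` D)
                     = f ` (top_of_set X interior_of (g ` D \<inter> g' ` D))"
      by (rule homeomorphic_map_interior_of[OF hm]) (use gDX[OF g] in auto)
    ultimately show "top_of_set Y interior_of (g ` f ` D \<inter> g' ` f ` D) = {}"
      using disjoint[OF g g' \<open>g \<noteq> g'\<close>] by simp
  qed
qed

section \<open>Connected transversals of a linked family\<close>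

locale map_group =
  fixes G :: "('a \<Rightarrow> 'a) set"
  assumes id_in_G: "id \<in> G"
    and comp_in_G: "\<And>g h. g \<in> G \<Longrightarrow> h \<in> G \<Longrightarrow> g \<circ> h \<in> G"
    and inverse_in_G: "\<And>g. g \<in> G \<Longrightarrow> \<exists>h\<in>G. g \<circ> h = id \<and> h \<circ> g = id"
begin

lemma obtain_inverse:
  assumes "g \<in> G"
  obtains h where "h \<in> G" "g \<circ> h = id" "h \<circ> g = id"
  using inverse_in_G[OF assms] by blast

definition translates :: "'a set set \<Rightarrow> 'a set set" where
  "translates R = {F. \<exists>g\<in>G. \<exists>F'\<in>R. F = g ` F'}"

definition partial_transversal :: "'a set set \<Rightarrow> bool" where
  "partial_transversal R \<longleftrightarrow> (\<forall>F\<in>R. \<forall>F'\<in>R. \<forall>g\<in>G. F = g ` F' \<longrightarrow> F = F')"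

lemma partial_transversalD:
  "partial_transversal R \<Longrightarrow> F \<in> R \<Longrightarrow> F' \<in> R \<Longrightarrow> g \<in> G \<Longrightarrow> F = g ` F' \<Longrightarrow> F = F'"
  unfolding partial_transversal_def by blast

lemma subset_translates: "R \<subseteq> translates R"
proof
  fix F assume "F \<in> R"
  then show "F \<in> translates R"
    unfolding translates_def using id_in_G by (auto intro!: bexI[of _ id])
qed

lemma translates_image:
  assumes "g \<in> G" "F \<in> translates R"
  shows "g ` F \<in> translates R"
proof -
  obtain h F' where "h \<in> G" "F' \<in> R" "F = h ` F'"
    using assms(2) unfolding translates_def by blast
  then have "g \<circ> h \<in> G" "g ` F = (g \<circ> h) ` F'"
    using comp_in_G[OF assms(1)] by (auto simp: image_comp)
  then show ?thesis
    using \<open>F' \<in> R\<close> unfolding translates_def by blast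
qed

lemma translates_image_cancel:
  assumes "g \<in> G" "g ` F \<in> translates R"
  shows "F \<in> translates R"
proof -
  obtain h where h: "h \<in> G" "h \<circ> g = id"
    using obtain_inverse[OF assms(1)] by blast
  then have "F = h ` g ` F"
    by (simp add: image_comp)
  then show ?thesis
    using translates_image[OF h(1) assms(2)] by simp
qed

lemma partial_transversal_insert:
  assumes R: "partial_transversal R" and F: "F \<notin> translates R"
  shows "partial_transversal (insert F R)"
  unfolding partial_transversal_def
proof (intro ballI impI)
  fix A B g assume A: "A \<in> insert F R" and B: "B \<in> insert F R" and g: "g \<in> G" and AB: "A = g ` B"
  consider "A = F" "B = F" | "A = F" "B \<in> R" | "A \<in> R" "B = F" | "A \<in> R" "B \<in> R"
    using A B by blast
  then show "A = B"
  proof cases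
    case 2
    then have "F \<in> translates R"
      using translates_image[OF g, of B R] subset_translates AB by auto
    with F show ?thesis ..
  next
    case 3
    then have "F \<in> translates R"
      using translates_image_cancel[OF g, of F R] subset_translates AB by auto
    with F show ?thesis ..
  next
    case 4
    then show ?thesis
      using partial_transversalD[OF R _ _ g AB] by blast
  qed simp
qed

lemma ex1_representative:
  assumes R: "partial_transversal R" and F: "F \<in> translates R"
  shows "\<exists>!F'. F' \<in> R \<and> (\<exists>g\<in>G. F = g ` F')"
proof -
  obtain F1 g1 where F1: "F1 \<in> R" "g1 \<in> G" "F = g1 ` F1"
    using F unfolding translates_def by blast
  have "F2 = F1" if F2: "F2 \<in> R" "g2 \<in> G" "F = g2 ` F2" for F2 g2
  proof -
    obtain h where h: "h \<in> G" "h \<circ> g2 = id"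
      using obtain_inverse[OF F2(2)] by blast
    have "F2 = h ` g2 ` F2"
      using h(2) by (simp add: image_comp)
    also have "\<dots> = (h \<circ> g1) ` F1"
      using F1(3) F2(3) by (simp add: image_comp)
    finally show ?thesis
      using partial_transversalD[OF R F2(1) F1(1) comp_in_G[OF h(1) F1(2)]] by blast
  qed
  then show ?thesis
    using F1 by (intro ex1I[of _ F1]) auto
qed

end

locale linked_family = map_group G for G :: "('a::topological_space \<Rightarrow> 'a) set" +
  fixes \<F> :: "'a set set"
  assumes finite_family: "finite \<F>"
    and connected_member: "\<And>F. F \<in> \<F> \<Longrightarrow> connected F"
    and image_member: "\<And>g F. g \<in> G \<Longrightarrow> F \<in> \<F> \<Longrightarrow> g ` F \<in> \<F>"
    and linked: "\<And>\<A>. \<A> \<subseteq> \<F> \<Longrightarrow> \<A> \<noteq> {} \<Longrightarrow> \<A> \<noteq> \<F> \<Longrightarrow>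
                   (\<And>g F. g \<in> G \<Longrightarrow> F \<in> \<A> \<Longrightarrow> g ` F \<in> \<A>) \<Longrightarrow> \<Union>\<A> \<inter> \<Union>(\<F> - \<A>) \<noteq> {}"
begin

lemma translates_subset_family:
  assumes "R \<subseteq> \<F>"
  shows "translates R \<subseteq> \<F>"
proof
  fix F assume "F \<in> translates R"
  then obtain g F' where "g \<in> G" "F' \<in> R" "F = g ` F'"
    unfolding translates_def by blast
  then show "F \<in> \<F>"
    using image_member assms by blast
qed

lemma exists_adjacent_untranslated:
  assumes R: "R \<subseteq> \<F>" "R \<noteq> {}" and missed: "\<not> \<F> \<subseteq> translates R"
  obtains F where "F \<in> \<F>" "F \<notin> translates R" "F \<inter> \<Union>R \<noteq> {}"
proof -
  have "translates R \<subseteq> \<F>" "translates R \<noteq> {}" "translates R \<noteq> \<F>"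
    using translates_subset_family[OF R(1)] subset_translates[of R] R(2) missed by auto
  from linked[OF this translates_image]
  obtain y T F2 where T: "T \<in> translates R" "y \<in> T"
    and F2: "F2 \<in> \<F>" "F2 \<notin> translates R" "y \<in> F2"
    by blast
  obtain g F1 where F1: "g \<in> G" "F1 \<in> R" "T = g ` F1"
    using T(1) unfolding translates_def by blast
  obtain h where h: "h \<in> G" "h \<circ> g = id"
    using obtain_inverse[OF F1(1)] by blast
  have "h y \<in> F1"
    using T(2) F1(3) h(2) by (auto simp: pointfree_idE)
  then have "h ` F2 \<inter> \<Union>R \<noteq> {}"
    using F1(2) F2(3) by blast
  moreover have "h ` F2 \<notin> translates R"
    using translates_image_cancel[OF h(1), of F2 R] F2(2) by blast
  ultimately show ?thesis
    using that image_member[OF h(1) F2(1)] by blast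
qed

lemma connected_transversal_exists:
  obtains R where "R \<subseteq> \<F>" "\<F> \<subseteq> translates R" "partial_transversal R" "connected (\<Union>R)"
proof -
  define C where "C = {R. R \<subseteq> \<F> \<and> partial_transversal R \<and> connected (\<Union>R)}"
  have "finite C"
  proof (rule finite_subset)
    show "C \<subseteq> Pow \<F>"
      unfolding C_def by blast
    show "finite (Pow \<F>)"
      using finite_family by simp
  qed
  moreover have "{} \<in> C"
    unfolding C_def partial_transversal_def by simp
  ultimately obtain R where "R \<in> C" and maximal: "\<And>R'. R' \<in> C \<Longrightarrow> R \<subseteq> R' \<Longrightarrow> R = R'"
    using finite_has_maximal[of C] by blast
  then have R: "R \<subseteq> \<F>" "partial_transversal R" "connected (\<Union>R)"
    unfolding C_def by auto
  have "\<F> \<subseteq> translates R"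
  proof (rule ccontr)
    assume missed: "\<not> \<F> \<subseteq> translates R"
    obtain F where F: "F \<in> \<F>" "F \<notin> translates R" "connected (F \<union> \<Union>R)"
    proof (cases "R = {}")
      case True
      obtain F where "F \<in> \<F>" "F \<notin> translates R"
        using missed by blast
      then show ?thesis
        using that[of F] connected_member[of F] True by simp
    next
      case False
      then obtain F where "F \<in> \<F>" "F \<notin> translates R" "F \<inter> \<Union>R \<noteq> {}"
        using exists_adjacent_untranslated[OF R(1) _ missed] by blast
      then show ?thesis
        using that connected_Un[OF connected_member R(3)] by blast
    qed
    have "insert F R \<in> C"
      unfolding C_def using F R(1) partial_transversal_insert[OF R(2) F(2)] by auto
    then have "insert F R = R"
      using maximal by blast
    then show False
      using F(2) subset_translates[of R] by blast
  qed
  then show ?thesis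
    using R that by blast
qed

end

section \<open>Orbit polytopes\<close>

locale orbit_polytope = map_group G for G :: "('a::euclidean_space \<Rightarrow> 'a) set" +
  fixes v0 :: 'a
  assumes finite_G: "finite G"
    and orthogonal_G: "\<And>g. g \<in> G \<Longrightarrow> orthogonal_transformation g"
    and free_on_sphere: "\<And>g x. g \<in> G \<Longrightarrow> x \<in> sphere 0 1 \<Longrightarrow> g x = x \<Longrightarrow> g = id"
    and v0_in_sphere: "v0 \<in> sphere 0 1"
    and affine_hull_orbit: "affine hull ((\<lambda>g. g v0) ` G) = UNIV"
begin

abbreviation V where "V \<equiv> (\<lambda>g. g v0) ` G"
abbreviation P where "P \<equiv> convex hull V"

lemma linear_G: "g \<in> G \<Longrightarrow> linear g"
  using orthogonal_G orthogonal_transformation_linear by blast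

lemma inj_G: "g \<in> G \<Longrightarrow> inj g"
  using orthogonal_G orthogonal_transformation_inj by blast

lemma normalize_G: "g \<in> G \<Longrightarrow> g (x /\<^sub>R norm x) = g x /\<^sub>R norm (g x)"
  using orthogonal_G linear_G by (simp add: linear_scale orthogonal_transformation_norm)

lemma fixes_nonzero_imp_id:
  assumes "g \<in> G" "g x = x" "x \<noteq> 0"
  shows "g = id"
  using free_on_sphere[OF assms(1), of "x /\<^sub>R norm x"] assms by (simp add: normalize_G)

lemma image_V: assumes "g \<in> G" shows "g ` V = V"
proof
  show "g ` V \<subseteq> V"
  proof
    fix y assume "y \<in> g ` V"
    then obtain h where "h \<in> G" "y = (g \<circ> h) v0"
      by auto
    then show "y \<in> V"
      using comp_in_G[OF assms] by blast
  qed
  show "V \<subseteq> g ` V"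
  proof
    fix x assume "x \<in> V"
    then obtain h where h: "h \<in> G" "x = h v0" by blast
    obtain k where k: "k \<in> G" "g \<circ> k = id"
      using obtain_inverse[OF assms] by blast
    then have "x = g ((k \<circ> h) v0)"
      using h by (metis comp_apply id_apply)
    then show "x \<in> g ` V"
      using comp_in_G[OF k(1) h(1)] by blast
  qed
qed

lemma image_P: "g \<in> G \<Longrightarrow> g ` P = P"
  by (simp add: convex_hull_linear_image linear_G image_V)

lemma polytope_P: "polytope P"
  using finite_G by (simp add: polytope_convex_hull)

lemma compact_P: "compact P"
  using polytope_P polytope_imp_compact by blast

lemma nontrivial_G: "\<exists>g\<in>G. g \<noteq> id"
proof (rule ccontr)
  assume "\<not> ?thesis"
  then have "G = {id}"
    using id_in_G by blast
  then have "V = {v0}"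
    by simp
  then have "0 = v0"
    using affine_hull_orbit by (metis UNIV_I affine_hull_sing singletonD)
  then show False
    using v0_in_sphere by simp
qed

lemma sum_V_eq_0: "(\<Sum>x\<in>V. x) = 0"
proof (rule ccontr)
  assume "(\<Sum>x\<in>V. x) \<noteq> 0"
  then have "g = id" if "g \<in> G" for g
    using fixes_nonzero_imp_id[OF that] linear_fixes_sum_of_invariant_set
      linear_G[OF that] inj_G[OF that] image_V[OF that] by blast
  then show False
    using nontrivial_G by blast
qed

lemma zero_in_interior_P: "0 \<in> interior P"
proof -
  have V: "finite V" "V \<noteq> {}"
    using finite_G id_in_G by auto
  then have "(\<Sum>x\<in>V. (1 / real (card V)) *\<^sub>R x)
               \<in> {y. \<exists>u. (\<forall>x\<in>V. 0 < u x) \<and> sum u V = 1 \<and> (\<Sum>x\<in>V. u x *\<^sub>R x) = y}"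
    by (intro CollectI exI[of _ "\<lambda>_. 1 / real (card V)"]) (simp add: card_gt_0_iff)
  then have "(\<Sum>x\<in>V. (1 / real (card V)) *\<^sub>R x) \<in> rel_interior P"
    using explicit_subset_rel_interior_convex_hull_minimal[OF V(1)] by blast
  then show ?thesis
    using sum_V_eq_0 rel_interior_interior[of P] affine_hull_orbit
    by (simp add: scaleR_sum_right[symmetric] affine_hull_convex_hull)
qed

lemma frontier_P: "frontier P = \<Union>{F. F facet_of P}"
  by (rule frontier_eq_Union_facets[OF polytope_imp_polyhedron[OF polytope_P]])
     (simp add: affine_hull_convex_hull affine_hull_orbit)

lemma compact_facet: "F facet_of P \<Longrightarrow> compact F"
  using face_of_imp_compact[OF convex_convex_hull compact_P] facet_of_imp_face_of by blast

lemma facet_image: "g \<in> G \<Longrightarrow> F facet_of P \<Longrightarrow> g ` F facet_of P"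
  using facet_of_linear_image[OF linear_G inj_G] image_P by metis

lemma image_frontier_P: "g \<in> G \<Longrightarrow> g ` frontier P \<subseteq> frontier P"
  unfolding frontier_P using facet_image by blast

lemma facet_stabiliser_trivial:
  assumes h: "h \<in> G" and F: "F facet_of P" and hF: "h ` F = F"
  shows "h = id"
proof -
  have "compact V"
    using finite_G by (simp add: finite_imp_compact)
  then obtain S where S: "S \<subseteq> V" "F = convex hull S"
    by (rule face_of_convex_hull_subset[OF _ facet_of_imp_face_of[OF F]])
  have "F \<noteq> {}"
    using F by (simp add: facet_of_def)
  then have nonempty: "F \<inter> V \<noteq> {}"
    using S hull_subset[of S convex] by auto
  have "F \<subseteq> frontier P"
    using F frontier_P by blast
  then have "0 \<notin> F"
    using zero_in_interior_P by (auto simp: frontier_def)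
  then have sum: "(\<Sum>x\<in>F \<inter> V. x) \<noteq> 0"
    using F finite_G nonempty
    by (intro sum_nonzero_if_convex_avoids_0[of F]) (auto intro: face_of_imp_convex facet_of_imp_face_of)
  have "h ` (F \<inter> V) = F \<inter> V"
    by (simp add: image_Int[OF inj_G[OF h]] hF image_V[OF h])
  then show ?thesis
    using fixes_nonzero_imp_id[OF h linear_fixes_sum_of_invariant_set[OF linear_G[OF h] inj_G[OF h]] sum]
    by blast
qed

lemma radial_projection_P:
  obtains f' where "homeomorphism (frontier P) (sphere 0 1) (\<lambda>x. x /\<^sub>R norm x) f'"
  using radial_projection_homeomorphism[OF convex_convex_hull compact_P zero_in_interior_P] by blast

lemma sphere_single_orbit_if_DIM_1:
  assumes "DIM('a) = 1" and x: "x \<in> sphere 0 1" and y: "y \<in> sphere 0 1"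
  shows "\<exists>g\<in>G. y = g x"
proof -
  obtain g where g: "g \<in> G" "g \<noteq> id"
    using nontrivial_G by blast
  have gx: "g x \<in> sphere 0 1"
    using x orthogonal_transformation_norm[OF orthogonal_G[OF g(1)]] by simp
  have "g x \<noteq> x"
    using free_on_sphere[OF g(1) x] g(2) by blast
  then have "y = x \<or> y = g x"
    using unit_vectors_DIM_1[OF assms(1), of x y] unit_vectors_DIM_1[OF assms(1), of x "g x"]
      x y gx by auto
  then show ?thesis
    using g(1) id_in_G by (metis id_apply)
qed

lemma frontier_single_orbit_if_DIM_1:
  assumes "DIM('a) = 1" and p: "p \<in> frontier P" and q: "q \<in> frontier P"
  shows "\<exists>g\<in>G. q = g p"
proof -
  obtain f' where hom: "homeomorphism (frontier P) (sphere 0 1) (\<lambda>x. x /\<^sub>R norm x) f'"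
    using radial_projection_P .
  have inverse_radial: "f' (x /\<^sub>R norm x) = x" if "x \<in> frontier P" for x
    by (rule homeomorphism_apply1[OF hom that])
  have on_sphere: "x /\<^sub>R norm x \<in> sphere 0 1" if "x \<in> frontier P" for x
    using that homeomorphism_image1[OF hom] by blast
  obtain g where g: "g \<in> G" "q /\<^sub>R norm q = g (p /\<^sub>R norm p)"
    using sphere_single_orbit_if_DIM_1[OF assms(1) on_sphere[OF p] on_sphere[OF q]] by blast
  have gp: "g p \<in> frontier P"
    using image_frontier_P[OF g(1)] p by blast
  have "q = f' (q /\<^sub>R norm q)"
    using inverse_radial[OF q] by (rule sym)
  also have "\<dots> = f' (g p /\<^sub>R norm (g p))"
    by (simp only: g(2) normalize_G[OF g(1)])
  also have "\<dots> = g p"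
    by (rule inverse_radial[OF gp])
  finally show ?thesis
    using g(1) by blast
qed

lemma invariant_closed_cover_frontier_meets:
  assumes "closed A" "closed B" "A \<union> B = frontier P" "A \<noteq> {}" "B \<noteq> {}"
    and invariant: "\<And>g. g \<in> G \<Longrightarrow> g ` A \<subseteq> A"
  shows "A \<inter> B \<noteq> {}"
proof (cases "DIM('a) = 1")
  case True
  obtain p q where "p \<in> A" "q \<in> B"
    using assms by blast
  then obtain g where "g \<in> G" "q = g p"
    using frontier_single_orbit_if_DIM_1[OF True] assms(3) by blast
  then show ?thesis
    using invariant \<open>p \<in> A\<close> \<open>q \<in> B\<close> by blast
next
  case False
  have "aff_dim P = aff_dim (affine hull V)"
    by (simp add: aff_dim_convex_hull)
  also have "\<dots> = DIM('a)"
    by (simp only: affine_hull_orbit aff_dim_UNIV)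
  finally have "aff_dim P = DIM('a)" .
  then have "connected (rel_frontier P)"
    using False connected_sphere_gen[OF convex_convex_hull compact_imp_bounded[OF compact_P]] by simp
  then have "connected (frontier P)"
    using rel_frontier_frontier[of P] affine_hull_orbit by (simp add: affine_hull_convex_hull)
  show ?thesis
  proof
    assume "A \<inter> B = {}"
    then have "A \<inter> frontier P = {} \<or> B \<inter> frontier P = {}"
      using connected_closedD[OF \<open>connected (frontier P)\<close>, of A B] assms(1-3) by auto
    then show False
      using assms(3-5) by auto
  qed
qed

sublocale facets: linked_family G "{F. F facet_of P}"
proof
  show "finite {F. F facet_of P}"
    using finite_polytope_facets[OF polytope_P] .
  show "connected F" if "F \<in> {F. F facet_of P}" for F
    using that by (meson convex_connected face_of_imp_convex facet_of_imp_face_of mem_Collect_eq)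
  show "g ` F \<in> {F. F facet_of P}" if "g \<in> G" "F \<in> {F. F facet_of P}" for g F
    using that facet_image by blast
next
  fix \<A> assume \<A>: "\<A> \<subseteq> {F. F facet_of P}" "\<A> \<noteq> {}" "\<A> \<noteq> {F. F facet_of P}"
    and invariant: "\<And>g F. g \<in> G \<Longrightarrow> F \<in> \<A> \<Longrightarrow> g ` F \<in> \<A>"
  have closed: "closed (\<Union>\<F>)" if "\<F> \<subseteq> {F. F facet_of P}" for \<F>
  proof (rule closed_Union)
    show "finite \<F>"
      using finite_subset[OF that finite_polytope_facets[OF polytope_P]] .
    show "\<forall>T\<in>\<F>. closed T"
      using that compact_facet compact_imp_closed by blast
  qed
  have nonempty: "\<Union>\<F> \<noteq> {}" if "\<F> \<subseteq> {F. F facet_of P}" "\<F> \<noteq> {}" for \<F>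
    using that by (auto simp: facet_of_def)
  have rest: "{F. F facet_of P} - \<A> \<subseteq> {F. F facet_of P}" "{F. F facet_of P} - \<A> \<noteq> {}"
    using \<A> by auto
  have cover: "\<Union>\<A> \<union> \<Union>({F. F facet_of P} - \<A>) = frontier P"
    using \<A>(1) unfolding frontier_P by blast
  have "g ` \<Union>\<A> \<subseteq> \<Union>\<A>" if "g \<in> G" for g
    using invariant[OF that] by blast
  then show "\<Union>\<A> \<inter> \<Union>({F. F facet_of P} - \<A>) \<noteq> {}"
    using invariant_closed_cover_frontier_meets[OF closed[OF \<A>(1)] closed[OF rest(1)] cover
        nonempty[OF \<A>(1,2)] nonempty[OF rest]] by blast
qed

lemma eq_if_translates_eq:
  assumes R: "R \<subseteq> {F. F facet_of P}" "partial_transversal R"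
    and F: "F \<in> R" "F' \<in> R" and g: "g \<in> G" "g' \<in> G" and eq: "g ` F = g' ` F'"
  shows "g = g'"
proof -
  obtain h where h: "h \<in> G" "g' \<circ> h = id" "h \<circ> g' = id"
    using obtain_inverse[OF g(2)] by blast
  have "F' = h ` g' ` F'"
    using h(3) by (simp add: image_comp)
  also have "\<dots> = h ` g ` F"
    by (simp only: eq)
  also have "\<dots> = (h \<circ> g) ` F"
    by (rule image_comp)
  finally have F': "F' = (h \<circ> g) ` F" .
  then have "F' = F"
    using partial_transversalD[OF R(2) F(2,1) comp_in_G[OF h(1) g(1)]] by blast
  then have "h \<circ> g = id"
    using facet_stabiliser_trivial[OF comp_in_G[OF h(1) g(1)]] R(1) F F' by auto
  then show ?thesis
    using h(2) by (metis comp_assoc comp_id id_comp)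
qed

lemma interior_of_translates_Int_empty:
  assumes R: "R \<subseteq> {F. F facet_of P}" "partial_transversal R"
    and g: "g \<in> G" "g' \<in> G" "g \<noteq> g'"
  shows "top_of_set (frontier P) interior_of (g ` \<Union>R \<inter> g' ` \<Union>R) = {}"
  unfolding interior_of_eq_empty
proof (intro allI impI)
  fix T assume T: "openin (top_of_set (frontier P)) T \<and> T \<subseteq> g ` \<Union>R \<inter> g' ` \<Union>R"
  then obtain W where W: "open W" "T = frontier P \<inter> W"
    by (auto simp: openin_open)
  show "T = {}"
  proof (rule ccontr)
    assume "T \<noteq> {}"
    then obtain F y where F: "F \<in> R" "y \<in> g ` F" "y \<in> W"
      using T W by blast
    have A: "g ` F facet_of P"
      using facet_image[OF g(1)] F(1) R(1) by blast
    have "g ` F \<subseteq> closure (rel_interior (g ` F))"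
      using convex_closure_rel_interior[OF face_of_imp_convex[OF facet_of_imp_face_of[OF A]]]
        closure_subset[of "g ` F"] by (simp only:)
    then have "W \<inter> closure (rel_interior (g ` F)) \<noteq> {}"
      using F(2,3) by blast
    then have "W \<inter> rel_interior (g ` F) \<noteq> {}"
      by (simp add: open_Int_closure_eq_empty[OF W(1)])
    then obtain z where z: "z \<in> W" "z \<in> rel_interior (g ` F)"
      by blast
    have "g ` F \<subseteq> frontier P"
      unfolding frontier_P using A by blast
    then have "z \<in> T"
      using W z rel_interior_subset by blast
    then obtain F1 F2 where F1: "F1 \<in> R" "z \<in> g ` F1" and F2: "F2 \<in> R" "z \<in> g' ` F2"
      using T by blast
    have "g ` F1 = g ` F"
      using facet_image[OF g(1)] F1 R(1) z(2) by (intro facets_eq_if_Int_rel_interior[OF _ A]) blast+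
    moreover have "g' ` F2 = g ` F"
      using facet_image[OF g(2)] F2 R(1) z(2) by (intro facets_eq_if_Int_rel_interior[OF _ A]) blast+
    ultimately show False
      using eq_if_translates_eq[OF R F1(1) F2(1) g(1,2)] g(3) by simp
  qed
qed

lemma fundamental_domain_frontier:
  assumes R: "R \<subseteq> {F. F facet_of P}" "{F. F facet_of P} \<subseteq> translates R"
    "partial_transversal R" "connected (\<Union>R)"
  shows "fundamental_domain G (frontier P) (\<Union>R)"
  unfolding fundamental_domain_def
proof (intro conjI ballI impI)
  show front: "\<Union>R \<subseteq> frontier P"
    unfolding frontier_P using R(1) by blast
  show "connected (\<Union>R)"
    using R(4) .
  have "compact (\<Union>R)"
  proof (rule compact_Union)
    show "finite R"
      using finite_subset[OF R(1) facets.finite_family] .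
    show "\<And>T. T \<in> R \<Longrightarrow> compact T"
      using R(1) compact_facet by blast
  qed
  then show "closedin (top_of_set (frontier P)) (\<Union>R)"
    by (rule closed_subset[OF front compact_imp_closed])
  show "frontier P = (\<Union>g\<in>G. g ` \<Union>R)"
  proof
    show "frontier P \<subseteq> (\<Union>g\<in>G. g ` \<Union>R)"
    proof
      fix x assume "x \<in> frontier P"
      then obtain F where F: "F facet_of P" "x \<in> F"
        unfolding frontier_P by blast
      then have "F \<in> translates R"
        using R(2) by blast
      then obtain g F' where "g \<in> G" "F' \<in> R" "F = g ` F'"
        unfolding translates_def by blast
      then show "x \<in> (\<Union>g\<in>G. g ` \<Union>R)"
        using F(2) by blast
    qed
    show "(\<Union>g\<in>G. g ` \<Union>R) \<subseteq> frontier P"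
      using image_frontier_P front by blast
  qed
  show "top_of_set (frontier P) interior_of (g ` \<Union>R \<inter> g' ` \<Union>R) = {}"
    if "g \<in> G" "g' \<in> G" "g \<noteq> g'" for g g'
    using interior_of_translates_Int_empty[OF R(1,3) that] .
qed

lemma fundamental_domain_sphere:
  assumes "fundamental_domain G (frontier P) D"
  shows "fundamental_domain G (sphere 0 1) ((\<lambda>x. x /\<^sub>R norm x) ` D)"
proof -
  obtain f' where hom: "homeomorphism (frontier P) (sphere 0 1) (\<lambda>x. x /\<^sub>R norm x) f'"
    using radial_projection_P .
  show ?thesis
  proof (rule fundamental_domain_homeomorphism_image[OF assms hom])
    show "g ` frontier P \<subseteq> frontier P" if "g \<in> G" for g
      using image_frontier_P[OF that] .
    show "g x /\<^sub>R norm (g x) = g (x /\<^sub>R norm x)" if "g \<in> G" "x \<in> frontier P" for g x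
      using normalize_G[OF that(1)] by (rule sym)
  qed
qed

end

theorem theorem6p4:
  fixes G :: "('a::euclidean_space \<Rightarrow> 'a) set" and v0 :: 'a
  assumes "finite G"
    and "id \<in> G"
    and "\<forall>g\<in>G. \<forall>h\<in>G. g \<circ> h \<in> G"
    and "\<forall>g\<in>G. \<exists>h\<in>G. g \<circ> h = id \<and> h \<circ> g = id"
    and "\<forall>g\<in>G. orthogonal_transformation g"
    and "\<forall>g\<in>G. \<forall>x\<in>sphere 0 1. g x = x \<longrightarrow> g = id"
    and "v0 \<in> sphere 0 1"
    and "affine hull ((\<lambda>g. g v0) ` G) = UNIV"
  shows "\<exists>R. facet_orbit_representatives G (convex hull ((\<lambda>g. g v0) ` G)) R \<and>
             fundamental_domain G (frontier (convex hull ((\<lambda>g. g v0) ` G))) (\<Union>R) \<and>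
             fundamental_domain G (sphere 0 1) ((\<lambda>x. x /\<^sub>R norm x) ` (\<Union>R))"
proof -
  interpret orbit_polytope G v0
    using assms by unfold_locales auto
  obtain R where R: "R \<subseteq> {F. F facet_of P}" "{F. F facet_of P} \<subseteq> translates R"
    "partial_transversal R" "connected (\<Union>R)"
    using facets.connected_transversal_exists .
  have "facet_orbit_representatives G P R"
    unfolding facet_orbit_representatives_def
  proof (intro conjI allI impI)
    show "\<forall>F\<in>R. F facet_of P"
      using R(1) by blast
    fix F assume "F facet_of P"
    then have "F \<in> translates R"
      using R(2) by blast
    then show "\<exists>!F'. F' \<in> R \<and> (\<exists>g\<in>G. F = g ` F')"
      by (rule ex1_representative[OF R(3)])
  qed
  moreover have "fundamental_domain G (frontier P) (\<Union>R)"
    using fundamental_domain_frontier[OF R] .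
  ultimately show ?thesis
    using fundamental_domain_sphere by blast
qed

end
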